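(* Let $T$ be a complete theory in a countable language with monster model $\mathfrak{C}$, $\alpha$ a countable ordinal and $C\subseteq\mathfrak{C}^{\alpha}$ an $\equiv_{L}^{\alpha}$-class. If $p\subseteq L_{\alpha}(\mathfrak{C})$ is a partial $C$-proper type, then for every formula $\varphi\in L_{\alpha}(\mathfrak{C})$, either $p\cup\{\varphi\}$ or $p\cup\{\neg\varphi\}$ is $C$-proper.
   Context: $L_{\alpha}(\mathfrak{C})$ denotes formulas in variables $(v_{i})_{i<\alpha}$ with parameters from $\mathfrak{C}$. The Lascar graph on $\mathfrak{C}^{\alpha}$ joins two distinct tuples lying on a common infinite indiscernible sequence (over $\emptyset$); $\equiv_{L}^{\alpha}$ has as classes its connected components. $\operatorname{Aut}f_{L}(\mathfrak{C})$ is the group generated by automorphisms of $\mathfrak{C}$ fixing pointwise some small elementary substructure. For $\varphi(x,a)$ and an automorphism $\sigma$, $\sigma(\varphi)=\varphi(x,\sigma(a))$. $\varphi$ is $C$-generic if finitely many translates $\sigma(\varphi)$, $\sigma\in\operatorname{Aut}f_{L}(\mathfrak{C})$, have a disjunction satisfied by every element of $C$. A partial type $p$ is $C$-proper if there is a non-$C$-generic formula $\psi$ such that $\varphi\vee\psi$ is $C$-generic for every finite conjunction $\varphi$ of formulas of $p$. *)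

theory Defs
  imports Main "HOL-Library.FuncSet" "HOL-Library.Countable_Set" "HOL-Library.Equipollence"
begin

text \<open>Language: function symbols of type 'f with arities fa, relation symbols of
type 'r with arities ra (constants are 0-ary function symbols). Parameters are
elements of the (universe of the) monster model, the type 'm.\<close>

datatype ('f,'m) trm = Var nat | Par 'm | Fn 'f "('f,'m) trm list"

datatype ('f,'r,'m) fm = Bot | Eq "('f,'m) trm" "('f,'m) trm"
  | Rel 'r "('f,'m) trm list" | Neg "('f,'r,'m) fm"
  | Conj "('f,'r,'m) fm" "('f,'r,'m) fm" | Ex nat "('f,'r,'m) fm"

fun wft :: "('f \<Rightarrow> nat) \<Rightarrow> ('f,'m) trm \<Rightarrow> bool" where
  "wft fa (Var n) = True"
| "wft fa (Par a) = True"
| "wft fa (Fn f ts) = (length ts = fa f \<and> (\<forall>t\<in>set ts. wft fa t))"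

fun evalt :: "('f \<Rightarrow> 'm list \<Rightarrow> 'm) \<Rightarrow> (nat \<Rightarrow> 'm) \<Rightarrow> ('f,'m) trm \<Rightarrow> 'm" where
  "evalt F e (Var n) = e n"
| "evalt F e (Par a) = a"
| "evalt F e (Fn f ts) = F f (map (evalt F e) ts)"

fun fvt :: "('f,'m) trm \<Rightarrow> nat set" where
  "fvt (Var n) = {n}"
| "fvt (Par a) = {}"
| "fvt (Fn f ts) = (\<Union>t\<in>set ts. fvt t)"

fun paramst :: "('f,'m) trm \<Rightarrow> 'm set" where
  "paramst (Var n) = {}"
| "paramst (Par a) = {a}"
| "paramst (Fn f ts) = (\<Union>t\<in>set ts. paramst t)"

fun mapt :: "('m \<Rightarrow> 'm) \<Rightarrow> ('f,'m) trm \<Rightarrow> ('f,'m) trm" where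
  "mapt g (Var n) = Var n"
| "mapt g (Par a) = Par (g a)"
| "mapt g (Fn f ts) = Fn f (map (mapt g) ts)"

fun wff :: "('f \<Rightarrow> nat) \<Rightarrow> ('r \<Rightarrow> nat) \<Rightarrow> ('f,'r,'m) fm \<Rightarrow> bool" where
  "wff fa ra Bot = True"
| "wff fa ra (Eq s t) = (wft fa s \<and> wft fa t)"
| "wff fa ra (Rel r ts) = (length ts = ra r \<and> (\<forall>t\<in>set ts. wft fa t))"
| "wff fa ra (Neg p) = wff fa ra p"
| "wff fa ra (Conj p q) = (wff fa ra p \<and> wff fa ra q)"
| "wff fa ra (Ex n p) = wff fa ra p"

fun sat_in :: "('f \<Rightarrow> 'm list \<Rightarrow> 'm) \<Rightarrow> ('r \<Rightarrow> 'm list \<Rightarrow> bool) \<Rightarrow> 'm set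
    \<Rightarrow> (nat \<Rightarrow> 'm) \<Rightarrow> ('f,'r,'m) fm \<Rightarrow> bool" where
  "sat_in F R N e Bot = False"
| "sat_in F R N e (Eq s t) = (evalt F e s = evalt F e t)"
| "sat_in F R N e (Rel r ts) = R r (map (evalt F e) ts)"
| "sat_in F R N e (Neg p) = (\<not> sat_in F R N e p)"
| "sat_in F R N e (Conj p q) = (sat_in F R N e p \<and> sat_in F R N e q)"
| "sat_in F R N e (Ex n p) = (\<exists>x\<in>N. sat_in F R N (e(n := x)) p)"

abbreviation sat :: "('f \<Rightarrow> 'm list \<Rightarrow> 'm) \<Rightarrow> ('r \<Rightarrow> 'm list \<Rightarrow> bool)
    \<Rightarrow> (nat \<Rightarrow> 'm) \<Rightarrow> ('f,'r,'m) fm \<Rightarrow> bool" where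
  "sat F R \<equiv> sat_in F R UNIV"

fun fv :: "('f,'r,'m) fm \<Rightarrow> nat set" where
  "fv Bot = {}"
| "fv (Eq s t) = fvt s \<union> fvt t"
| "fv (Rel r ts) = (\<Union>t\<in>set ts. fvt t)"
| "fv (Neg p) = fv p"
| "fv (Conj p q) = fv p \<union> fv q"
| "fv (Ex n p) = fv p - {n}"

fun params :: "('f,'r,'m) fm \<Rightarrow> 'm set" where
  "params Bot = {}"
| "params (Eq s t) = paramst s \<union> paramst t"
| "params (Rel r ts) = (\<Union>t\<in>set ts. paramst t)"
| "params (Neg p) = params p"
| "params (Conj p q) = params p \<union> params q"
| "params (Ex n p) = params p"

text \<open>map_fm g phi replaces every parameter a by g a; for an automorphism sigma,
map_fm sigma (phi(x,a)) = phi(x, sigma(a)).\<close>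
fun map_fm :: "('m \<Rightarrow> 'm) \<Rightarrow> ('f,'r,'m) fm \<Rightarrow> ('f,'r,'m) fm" where
  "map_fm g Bot = Bot"
| "map_fm g (Eq s t) = Eq (mapt g s) (mapt g t)"
| "map_fm g (Rel r ts) = Rel r (map (mapt g) ts)"
| "map_fm g (Neg p) = Neg (map_fm g p)"
| "map_fm g (Conj p q) = Conj (map_fm g p) (map_fm g q)"
| "map_fm g (Ex n p) = Ex n (map_fm g p)"

definition Top :: "('f,'r,'m) fm" where "Top = Neg Bot"

definition Disj :: "('f,'r,'m) fm \<Rightarrow> ('f,'r,'m) fm \<Rightarrow> ('f,'r,'m) fm" where
  "Disj p q = Neg (Conj (Neg p) (Neg q))"

definition conjl :: "('f,'r,'m) fm list \<Rightarrow> ('f,'r,'m) fm" where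
  "conjl qs = foldr Conj qs Top"

definition is_aut :: "('f \<Rightarrow> nat) \<Rightarrow> ('r \<Rightarrow> nat) \<Rightarrow> ('f \<Rightarrow> 'm list \<Rightarrow> 'm)
    \<Rightarrow> ('r \<Rightarrow> 'm list \<Rightarrow> bool) \<Rightarrow> ('m \<Rightarrow> 'm) \<Rightarrow> bool" where
  "is_aut fa ra F R \<sigma> \<longleftrightarrow> bij \<sigma>
     \<and> (\<forall>f xs. length xs = fa f \<longrightarrow> \<sigma> (F f xs) = F f (map \<sigma> xs))
     \<and> (\<forall>r xs. length xs = ra r \<longrightarrow> (R r (map \<sigma> xs) \<longleftrightarrow> R r xs))"

definition elem_sub :: "('f \<Rightarrow> nat) \<Rightarrow> ('r \<Rightarrow> nat) \<Rightarrow> ('f \<Rightarrow> 'm list \<Rightarrow> 'm)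
    \<Rightarrow> ('r \<Rightarrow> 'm list \<Rightarrow> bool) \<Rightarrow> 'm set \<Rightarrow> bool" where
  "elem_sub fa ra F R N \<longleftrightarrow> N \<noteq> {}
     \<and> (\<forall>f xs. length xs = fa f \<and> set xs \<subseteq> N \<longrightarrow> F f xs \<in> N)
     \<and> (\<forall>(\<phi>::('f,'r,'m) fm) e. wff fa ra \<phi> \<and> params \<phi> \<subseteq> N \<and> range e \<subseteq> N
          \<longrightarrow> (sat_in F R N e \<phi> \<longleftrightarrow> sat F R e \<phi>))"

text \<open>"Small" means of cardinality less than kappa, where kappa = |K|.\<close>
definition small :: "'k set \<Rightarrow> 'm set \<Rightarrow> bool" where
  "small K A \<longleftrightarrow> A \<prec> K"

definition saturated :: "('f \<Rightarrow> nat) \<Rightarrow> ('r \<Rightarrow> nat) \<Rightarrow> ('f \<Rightarrow> 'm list \<Rightarrow> 'm)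
    \<Rightarrow> ('r \<Rightarrow> 'm list \<Rightarrow> bool) \<Rightarrow> 'k set \<Rightarrow> bool" where
  "saturated fa ra F R K \<longleftrightarrow>
     (\<forall>A (p :: ('f,'r,'m) fm set). small K A
        \<and> (\<forall>\<phi>\<in>p. wff fa ra \<phi> \<and> fv \<phi> \<subseteq> {0} \<and> params \<phi> \<subseteq> A)
        \<and> (\<forall>Q. finite Q \<and> Q \<subseteq> p \<longrightarrow> (\<exists>x. \<forall>\<phi>\<in>Q. sat F R (\<lambda>_. x) \<phi>))
        \<longrightarrow> (\<exists>x. \<forall>\<phi>\<in>p. sat F R (\<lambda>_. x) \<phi>))"

definition strongly_homogeneous :: "('f \<Rightarrow> nat) \<Rightarrow> ('r \<Rightarrow> nat) \<Rightarrow> ('f \<Rightarrow> 'm list \<Rightarrow> 'm)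
    \<Rightarrow> ('r \<Rightarrow> 'm list \<Rightarrow> bool) \<Rightarrow> 'k set \<Rightarrow> bool" where
  "strongly_homogeneous fa ra F R K \<longleftrightarrow>
     (\<forall>A g. small K A
        \<and> (\<forall>(\<phi>::('f,'r,'m) fm) e. wff fa ra \<phi> \<and> fv \<phi> = {} \<and> params \<phi> \<subseteq> A
             \<longrightarrow> (sat F R e \<phi> \<longleftrightarrow> sat F R e (map_fm g \<phi>)))
        \<longrightarrow> (\<exists>\<sigma>. is_aut fa ra F R \<sigma> \<and> (\<forall>a\<in>A. \<sigma> a = g a)))"

text \<open>The structure on the universe 'm is a monster model of its (complete) theory:
kappa-saturated and strongly kappa-homogeneous for an uncountable kappa = |K|
(so kappa exceeds the cardinality of the countable language).\<close>
definition monster :: "('f \<Rightarrow> nat) \<Rightarrow> ('r \<Rightarrow> nat) \<Rightarrow> ('f \<Rightarrow> 'm list \<Rightarrow> 'm)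
    \<Rightarrow> ('r \<Rightarrow> 'm list \<Rightarrow> bool) \<Rightarrow> 'k set \<Rightarrow> bool" where
  "monster fa ra F R K \<longleftrightarrow> uncountable K
     \<and> saturated fa ra F R K \<and> strongly_homogeneous fa ra F R K"

text \<open>Generators of Autf_L: automorphisms fixing pointwise a small elementary substructure.
This set is closed under inverses, so the generated group is the set of finite
compositions of generators.\<close>
definition autf_gen :: "('f \<Rightarrow> nat) \<Rightarrow> ('r \<Rightarrow> nat) \<Rightarrow> ('f \<Rightarrow> 'm list \<Rightarrow> 'm)
    \<Rightarrow> ('r \<Rightarrow> 'm list \<Rightarrow> bool) \<Rightarrow> 'k set \<Rightarrow> ('m \<Rightarrow> 'm) \<Rightarrow> bool" where
  "autf_gen fa ra F R K \<sigma> \<longleftrightarrow> is_aut fa ra F R \<sigma>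
     \<and> (\<exists>N. elem_sub fa ra F R N \<and> small K N \<and> (\<forall>x\<in>N. \<sigma> x = x))"

inductive autfL :: "('f \<Rightarrow> nat) \<Rightarrow> ('r \<Rightarrow> nat) \<Rightarrow> ('f \<Rightarrow> 'm list \<Rightarrow> 'm)
    \<Rightarrow> ('r \<Rightarrow> 'm list \<Rightarrow> bool) \<Rightarrow> 'k set \<Rightarrow> ('m \<Rightarrow> 'm) \<Rightarrow> bool"
  for fa ra F R K where
  autfL_id: "autfL fa ra F R K id"
| autfL_comp: "autf_gen fa ra F R K \<sigma> \<Longrightarrow> autfL fa ra F R K \<tau> \<Longrightarrow> autfL fa ra F R K (\<sigma> \<circ> \<tau>)"

text \<open>The countable ordinal alpha is represented by a countable index set I of naturals
(only its cardinality matters); alpha-tuples are elements of I \<rightarrow>E UNIV.\<close>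
definition tuples :: "nat set \<Rightarrow> (nat \<Rightarrow> 'm) set" where
  "tuples I = I \<rightarrow>\<^sub>E (UNIV :: 'm set)"

definition Lform :: "('f \<Rightarrow> nat) \<Rightarrow> ('r \<Rightarrow> nat) \<Rightarrow> nat set \<Rightarrow> ('f,'r,'m) fm set" where
  "Lform fa ra I = {\<phi>. wff fa ra \<phi> \<and> fv \<phi> \<subseteq> I}"

text \<open>An (omega-indexed) indiscernible sequence of alpha-tuples over the empty set:
variable number prod_encode (k,i) stands for the i-th coordinate of the k-th tuple.\<close>
definition indiscernible :: "('f \<Rightarrow> nat) \<Rightarrow> ('r \<Rightarrow> nat) \<Rightarrow> ('f \<Rightarrow> 'm list \<Rightarrow> 'm)
    \<Rightarrow> ('r \<Rightarrow> 'm list \<Rightarrow> bool) \<Rightarrow> nat set \<Rightarrow> (nat \<Rightarrow> nat \<Rightarrow> 'm) \<Rightarrow> bool" where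
  "indiscernible fa ra F R I s \<longleftrightarrow> (\<forall>k. s k \<in> tuples I)
     \<and> (\<forall>(\<phi>::('f,'r,'m) fm) f g. wff fa ra \<phi> \<and> params \<phi> = {}
          \<and> (\<forall>x\<in>fv \<phi>. snd (prod_decode x) \<in> I) \<and> strict_mono f \<and> strict_mono g
          \<longrightarrow> (sat F R (\<lambda>x. s (f (fst (prod_decode x))) (snd (prod_decode x))) \<phi>
               \<longleftrightarrow> sat F R (\<lambda>x. s (g (fst (prod_decode x))) (snd (prod_decode x))) \<phi>))"

definition lascar_edge :: "('f \<Rightarrow> nat) \<Rightarrow> ('r \<Rightarrow> nat) \<Rightarrow> ('f \<Rightarrow> 'm list \<Rightarrow> 'm)
    \<Rightarrow> ('r \<Rightarrow> 'm list \<Rightarrow> bool) \<Rightarrow> nat set \<Rightarrow> (nat \<Rightarrow> 'm) \<Rightarrow> (nat \<Rightarrow> 'm) \<Rightarrow> bool" where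
  "lascar_edge fa ra F R I a b \<longleftrightarrow> a \<in> tuples I \<and> b \<in> tuples I \<and> a \<noteq> b
     \<and> (\<exists>s i j. indiscernible fa ra F R I s \<and> s i = a \<and> s j = b)"

definition lascar_class :: "('f \<Rightarrow> nat) \<Rightarrow> ('r \<Rightarrow> nat) \<Rightarrow> ('f \<Rightarrow> 'm list \<Rightarrow> 'm)
    \<Rightarrow> ('r \<Rightarrow> 'm list \<Rightarrow> bool) \<Rightarrow> nat set \<Rightarrow> (nat \<Rightarrow> 'm) set \<Rightarrow> bool" where
  "lascar_class fa ra F R I C \<longleftrightarrow>
     (\<exists>a\<in>tuples I. C = {b. (lascar_edge fa ra F R I)\<^sup>*\<^sup>* a b})"

definition generic :: "('f \<Rightarrow> nat) \<Rightarrow> ('r \<Rightarrow> nat) \<Rightarrow> ('f \<Rightarrow> 'm list \<Rightarrow> 'm)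
    \<Rightarrow> ('r \<Rightarrow> 'm list \<Rightarrow> bool) \<Rightarrow> 'k set \<Rightarrow> (nat \<Rightarrow> 'm) set \<Rightarrow> ('f,'r,'m) fm \<Rightarrow> bool" where
  "generic fa ra F R K C \<phi> \<longleftrightarrow>
     (\<exists>S. finite S \<and> (\<forall>\<sigma>\<in>S. autfL fa ra F R K \<sigma>)
        \<and> (\<forall>c\<in>C. \<exists>\<sigma>\<in>S. sat F R c (map_fm \<sigma> \<phi>)))"

definition proper :: "('f \<Rightarrow> nat) \<Rightarrow> ('r \<Rightarrow> nat) \<Rightarrow> ('f \<Rightarrow> 'm list \<Rightarrow> 'm)
    \<Rightarrow> ('r \<Rightarrow> 'm list \<Rightarrow> bool) \<Rightarrow> 'k set \<Rightarrow> nat set \<Rightarrow> (nat \<Rightarrow> 'm) set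
    \<Rightarrow> ('f,'r,'m) fm set \<Rightarrow> bool" where
  "proper fa ra F R K I C p \<longleftrightarrow>
     (\<exists>\<psi>\<in>Lform fa ra I. \<not> generic fa ra F R K C \<psi>
        \<and> (\<forall>qs. set qs \<subseteq> p \<longrightarrow> generic fa ra F R K C (Disj (conjl qs) \<psi>)))"

definition partial_type :: "('f \<Rightarrow> nat) \<Rightarrow> ('r \<Rightarrow> nat) \<Rightarrow> ('f \<Rightarrow> 'm list \<Rightarrow> 'm)
    \<Rightarrow> ('r \<Rightarrow> 'm list \<Rightarrow> bool) \<Rightarrow> nat set \<Rightarrow> ('f,'r,'m) fm set \<Rightarrow> bool" where
  "partial_type fa ra F R I p \<longleftrightarrow> p \<subseteq> Lform fa ra I
     \<and> (\<forall>Q. finite Q \<and> Q \<subseteq> p \<longrightarrow> (\<exists>e. \<forall>\<phi>\<in>Q. sat F R e \<phi>))"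

end

theory Submission
  imports Defs
begin

text \<open>Let \<psi> witness that p is C-proper. If p \<union> {\<phi>} is not C-proper, some finite conjunction
\<chi> of formulas of p \<union> {\<phi>} makes \<chi> \<or> \<psi> non-generic; this \<chi> \<or> \<psi> witnesses that p \<union> {\<not>\<phi>}
is C-proper. Indeed, for a finite conjunction \<theta> of formulas of p \<union> {\<not>\<phi>}, let \<theta>' be the
conjunction of the formulas of p occurring in \<theta> or \<chi>: then \<theta>' \<or> \<psi> is generic, and each
translate of \<theta>' implies the corresponding translate of \<theta> \<or> \<chi>, by cases on the translate
of \<phi>.\<close>

lemma sat_map_conjl:
  "sat F R e (map_fm \<sigma> (conjl qs)) \<longleftrightarrow> (\<forall>q\<in>set qs. sat F R e (map_fm \<sigma> q))"
  by (induction qs) (auto simp: conjl_def Top_def)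

lemma sat_map_Disj:
  "sat F R e (map_fm \<sigma> (Disj a b)) \<longleftrightarrow> sat F R e (map_fm \<sigma> a) \<or> sat F R e (map_fm \<sigma> b)"
  by (simp add: Disj_def)

lemma conjl_Lform: "set qs \<subseteq> Lform fa ra I \<Longrightarrow> conjl qs \<in> Lform fa ra I"
  by (induction qs) (auto simp: conjl_def Top_def Lform_def)

lemma Disj_Lform: "a \<in> Lform fa ra I \<Longrightarrow> b \<in> Lform fa ra I \<Longrightarrow> Disj a b \<in> Lform fa ra I"
  by (auto simp: Disj_def Lform_def)

lemma generic_mono:
  assumes "generic fa ra F R K C a"
    and "\<And>\<sigma> e. sat F R e (map_fm \<sigma> a) \<Longrightarrow> sat F R e (map_fm \<sigma> b)"
  shows "generic fa ra F R K C b"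
  using assms unfolding generic_def by meson

lemma sat_map_conjl_case_split:
  assumes "set qs \<subseteq> p \<union> {Neg \<phi>}" and "set qs' \<subseteq> p \<union> {\<phi>}"
    and "sat F R e (map_fm \<sigma> (conjl (filter (\<lambda>q. q \<in> p) (qs @ qs'))))"
  shows "sat F R e (map_fm \<sigma> (conjl qs)) \<or> sat F R e (map_fm \<sigma> (conjl qs'))"
proof (cases "sat F R e (map_fm \<sigma> \<phi>)")
  case True
  then have "\<forall>q\<in>set qs'. sat F R e (map_fm \<sigma> q)"
    using assms(2,3) by (auto simp: sat_map_conjl)
  then show ?thesis by (simp add: sat_map_conjl)
next
  case False
  then have "\<forall>q\<in>set qs. sat F R e (map_fm \<sigma> q)"
    using assms(1,3) by (auto simp: sat_map_conjl)
  then show ?thesis by (simp add: sat_map_conjl)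
qed

lemma proper_insert_Neg:
  assumes p_L: "p \<subseteq> Lform fa ra I" and \<phi>_L: "\<phi> \<in> Lform fa ra I"
    and proper_p: "proper fa ra F R K I C p"
    and not_proper: "\<not> proper fa ra F R K I C (p \<union> {\<phi>})"
  shows "proper fa ra F R K I C (p \<union> {Neg \<phi>})"
proof -
  from proper_p obtain \<psi> where \<psi>_L: "\<psi> \<in> Lform fa ra I"
    and \<psi>_not_generic: "\<not> generic fa ra F R K C \<psi>"
    and p_generic: "\<And>qs. set qs \<subseteq> p \<Longrightarrow> generic fa ra F R K C (Disj (conjl qs) \<psi>)"
    unfolding proper_def by blast
  from not_proper \<psi>_L \<psi>_not_generic obtain qs' where qs': "set qs' \<subseteq> p \<union> {\<phi>}"
    and not_generic: "\<not> generic fa ra F R K C (Disj (conjl qs') \<psi>)"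
    unfolding proper_def by blast
  have witness_L: "Disj (conjl qs') \<psi> \<in> Lform fa ra I"
    using qs' p_L \<phi>_L \<psi>_L by (intro Disj_Lform conjl_Lform) auto
  have "generic fa ra F R K C (Disj (conjl qs) (Disj (conjl qs') \<psi>))"
    if qs: "set qs \<subseteq> p \<union> {Neg \<phi>}" for qs
  proof (rule generic_mono)
    let ?qs_p = "filter (\<lambda>q. q \<in> p) (qs @ qs')"
    show "generic fa ra F R K C (Disj (conjl ?qs_p) \<psi>)"
      by (rule p_generic) auto
    show "sat F R e (map_fm \<sigma> (Disj (conjl qs) (Disj (conjl qs') \<psi>)))"
      if "sat F R e (map_fm \<sigma> (Disj (conjl ?qs_p) \<psi>))" for \<sigma> e
      using that sat_map_conjl_case_split[OF qs qs'] by (auto simp: sat_map_Disj)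
  qed
  with witness_L not_generic show ?thesis
    unfolding proper_def by blast
qed

theorem lemma4p9:
  fixes fa :: "'f::countable \<Rightarrow> nat" and ra :: "'r::countable \<Rightarrow> nat"
    and F :: "'f \<Rightarrow> 'm list \<Rightarrow> 'm" and R :: "'r \<Rightarrow> 'm list \<Rightarrow> bool"
    and K :: "'k set" and I :: "nat set" and C :: "(nat \<Rightarrow> 'm) set"
    and p :: "('f,'r,'m) fm set" and \<phi> :: "('f,'r,'m) fm"
  assumes "monster fa ra F R K"
    and "lascar_class fa ra F R I C"
    and "partial_type fa ra F R I p"
    and "proper fa ra F R K I C p"
    and "\<phi> \<in> Lform fa ra I"
  shows "proper fa ra F R K I C (p \<union> {\<phi>}) \<or> proper fa ra F R K I C (p \<union> {Neg \<phi>})"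
proof -
  have "p \<subseteq> Lform fa ra I"
    using assms(3) by (simp add: partial_type_def)
  then show ?thesis
    using proper_insert_Neg assms(4,5) by blast
qed

end
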